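(* Let $S$ be an additively cancellative semiring with $1\neq 0$ and let $n\geq 2$. Then neither the semiring $M_n(S)$ of all $n\times n$ matrices over $S$ nor the semiring $T_n(S)$ of all upper triangular $n\times n$ matrices over $S$ is centrally essential.
   Context: A semiring is a set $S$ with two binary operations $+$ and $\cdot$ such that $(S,+)$ is a commutative monoid with neutral element $0$, $(S,\cdot)$ is a monoid with identity $1$, multiplication distributes over addition on both sides, and $0s=s0=0$ for all $s\in S$. $M_n(S)$ and $T_n(S)$ carry the usual matrix addition and multiplication. The center is $C(R)=\{r\in R: rr'=r'r \text{ for all } r'\in R\}$. A semiring $R$ is centrally essential if for every non-zero $x\in R$ there exist non-zero $y,z\in C(R)$ with $xy=z$. $S$ is additively cancellative if $x+z=y+z$ implies $x=y$. *)

theory Defs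
  imports "Jordan_Normal_Form.Matrix"
begin

definition center_of :: "'b set \<Rightarrow> ('b \<Rightarrow> 'b \<Rightarrow> 'b) \<Rightarrow> 'b set" where
  "center_of R mul = {r \<in> R. \<forall>r' \<in> R. mul r r' = mul r' r}"

definition centrally_essential :: "'b set \<Rightarrow> ('b \<Rightarrow> 'b \<Rightarrow> 'b) \<Rightarrow> 'b \<Rightarrow> bool" where
  "centrally_essential R mul zr \<longleftrightarrow>
     (\<forall>x \<in> R. x \<noteq> zr \<longrightarrow>
        (\<exists>y z. y \<in> center_of R mul \<and> z \<in> center_of R mul \<and> y \<noteq> zr \<and> z \<noteq> zr \<and> mul x y = z))"

end

theory Submission
  imports Defs
begin

text \<open>Let \<open>R\<close> be a semiring of \<open>n \<times> n\<close> matrices containing every matrix unit \<open>E p q\<close>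
  with \<open>p \<le> q\<close>. Commuting with \<open>E q q\<close> kills the off-diagonal entries of a central matrix,
  and commuting with \<open>E 0 q\<close> makes its diagonal constant, so the centre consists of scalar
  matrices \<open>c I\<close>. For \<open>x = E 0 (n - 1)\<close> and central \<open>y = c I\<close>, the product \<open>x y = c E 0 (n - 1)\<close>
  is central only if \<open>c = 0\<close>, because \<open>n \<ge> 2\<close> puts the entry \<open>c\<close> off the diagonal.\<close>

definition matrix_unit :: "nat \<Rightarrow> nat \<Rightarrow> nat \<Rightarrow> 'a::semiring_1 mat" where
  "matrix_unit n p q = mat n n (\<lambda>(i, j). if i = p \<and> j = q then 1 else 0)"

lemma matrix_unit_carrier [simp]: "matrix_unit n p q \<in> carrier_mat n n"
  by (simp add: matrix_unit_def)

lemma upper_triangular_matrix_unit: "p \<le> q \<Longrightarrow> upper_triangular (matrix_unit n p q)"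
  by (auto simp: matrix_unit_def upper_triangular_def)

lemma index_matrix_unit [simp]:
  "i < n \<Longrightarrow> j < n \<Longrightarrow> matrix_unit n p q $$ (i, j) = (if i = p \<and> j = q then 1 else 0)"
  by (simp add: matrix_unit_def)

lemma index_mult_matrix_unit_right:
  assumes "A \<in> carrier_mat n n" and "i < n" "j < n" "p < n"
  shows "(A * matrix_unit n p q) $$ (i, j) = (if j = q then A $$ (i, p) else 0)"
proof -
  have "(A * matrix_unit n p q) $$ (i, j) =
      (\<Sum>k\<in>{0..<n}. A $$ (i, k) * (if k = p \<and> j = q then 1 else 0))"
    using assms by (auto simp: matrix_unit_def scalar_prod_def intro!: sum.cong)
  also have "\<dots> = (\<Sum>k\<in>{0..<n}. if k = p then (if j = q then A $$ (i, k) else 0) else 0)"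
    by (rule sum.cong) auto
  also have "\<dots> = (if j = q then A $$ (i, p) else 0)"
    using assms by (simp add: sum.delta)
  finally show ?thesis .
qed

lemma index_mult_matrix_unit_left:
  assumes "A \<in> carrier_mat n n" and "i < n" "j < n" "q < n"
  shows "(matrix_unit n p q * A) $$ (i, j) = (if i = p then A $$ (q, j) else 0)"
proof -
  have "(matrix_unit n p q * A) $$ (i, j) =
      (\<Sum>k\<in>{0..<n}. (if i = p \<and> k = q then 1 else 0) * A $$ (k, j))"
    using assms by (auto simp: matrix_unit_def scalar_prod_def intro!: sum.cong)
  also have "\<dots> = (\<Sum>k\<in>{0..<n}. if k = q then (if i = p then A $$ (k, j) else 0) else 0)"
    by (rule sum.cong) auto
  also have "\<dots> = (if i = p then A $$ (q, j) else 0)"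
    using assms by (simp add: sum.delta)
  finally show ?thesis .
qed

lemma commute_matrix_unit_diag_eq:
  assumes "A \<in> carrier_mat n n" "p < n" "q < n"
    and "A * matrix_unit n p q = matrix_unit n p q * A"
  shows "A $$ (p, p) = A $$ (q, q)"
  using arg_cong[OF assms(4), of "\<lambda>B. B $$ (p, q)"] assms(1-3)
  by (simp add: index_mult_matrix_unit_right index_mult_matrix_unit_left)

lemma commute_matrix_unit_col_zero:
  assumes "A \<in> carrier_mat n n" "i < n" "q < n" "i \<noteq> q"
    and "A * matrix_unit n q q = matrix_unit n q q * A"
  shows "A $$ (i, q) = 0"
  using arg_cong[OF assms(5), of "\<lambda>B. B $$ (i, q)"] assms(1-4)
  by (simp add: index_mult_matrix_unit_right index_mult_matrix_unit_left)

context
  fixes R :: "'a::semiring_1 mat set" and n :: nat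
  assumes carrier: "R \<subseteq> carrier_mat n n"
    and upper_units: "\<And>p q. p \<le> q \<Longrightarrow> q < n \<Longrightarrow> matrix_unit n p q \<in> R"
begin

lemma center_of_upper_units_scalar:
  assumes "y \<in> center_of R (*)" and "i < n" "j < n"
  shows "y $$ (i, j) = (if i = j then y $$ (0, 0) else 0)"
proof -
  have yC: "y \<in> carrier_mat n n"
    using assms(1) carrier by (auto simp: center_of_def)
  have commutes: "y * matrix_unit n p q = matrix_unit n p q * y" if "p \<le> q" "q < n" for p q
    using assms(1) upper_units[OF that] by (auto simp: center_of_def)
  show ?thesis
  proof (cases "i = j")
    case True
    have "y $$ (0, 0) = y $$ (j, j)"
      using commute_matrix_unit_diag_eq[OF yC _ assms(3) commutes[of 0 j]] assms(3) by simp
    with True show ?thesis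
      by simp
  next
    case False
    have "y $$ (i, j) = 0"
      using commute_matrix_unit_col_zero[OF yC assms(2,3) False commutes[of j j]] assms(3) by simp
    with False show ?thesis
      by simp
  qed
qed

lemma not_centrally_essential_upper_units:
  assumes "n \<ge> 2"
  shows "\<not> centrally_essential R (*) (0\<^sub>m n n)"
proof
  assume "centrally_essential R (*) (0\<^sub>m n n)"
  define m where "m = n - 1"
  have m: "0 < m" "m < n"
    using assms by (auto simp: m_def)
  let ?x = "matrix_unit n 0 m :: 'a mat"
  have "?x $$ (0, m) \<noteq> 0\<^sub>m n n $$ (0, m)"
    using m by simp
  then have "?x \<noteq> 0\<^sub>m n n"
    by metis
  moreover have "?x \<in> R"
    using upper_units m by simp
  ultimately obtain y z where y: "y \<in> center_of R (*)" and z: "z \<in> center_of R (*)"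
    and y_nonzero: "y \<noteq> 0\<^sub>m n n" and xy: "?x * y = z"
    using \<open>centrally_essential R (*) (0\<^sub>m n n)\<close> unfolding centrally_essential_def by blast
  have yC: "y \<in> carrier_mat n n"
    using y carrier by (auto simp: center_of_def)
  have "y $$ (0, 0) = y $$ (m, m)"
    using center_of_upper_units_scalar[OF y m(2) m(2)] by simp
  also have "\<dots> = z $$ (0, m)"
    using yC m by (simp add: xy[symmetric] index_mult_matrix_unit_left)
  also have "\<dots> = 0"
    using center_of_upper_units_scalar[OF z, of 0 m] m by simp
  finally have y00: "y $$ (0, 0) = 0" .
  have "y = 0\<^sub>m n n"
  proof (rule eq_matI)
    fix i j
    assume "i < dim_row (0\<^sub>m n n :: 'a mat)" "j < dim_col (0\<^sub>m n n :: 'a mat)"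
    then show "y $$ (i, j) = 0\<^sub>m n n $$ (i, j)"
      using center_of_upper_units_scalar[OF y, of i j] y00 by simp
  qed (use yC in auto)
  with y_nonzero show False ..
qed

end

theorem corollary2p4:
  fixes n :: nat
  assumes canc: "\<forall>x y z :: 'a :: semiring_1. x + z = y + z \<longrightarrow> x = y"
    and n2: "n \<ge> 2"
  shows "\<not> centrally_essential (carrier_mat n n :: 'a mat set) (*) (0\<^sub>m n n)
       \<and> \<not> centrally_essential {A \<in> carrier_mat n n :: 'a mat set. upper_triangular A} (*) (0\<^sub>m n n)"
proof
  show "\<not> centrally_essential (carrier_mat n n :: 'a mat set) (*) (0\<^sub>m n n)"
    by (rule not_centrally_essential_upper_units[OF _ _ n2]) auto
  show "\<not> centrally_essential {A \<in> carrier_mat n n :: 'a mat set. upper_triangular A} (*) (0\<^sub>m n n)"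
    by (rule not_centrally_essential_upper_units[OF _ _ n2]) (auto simp: upper_triangular_matrix_unit)
qed

end
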